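(* For every $h\ge 1$, every ray $\rho$ with $|\rho|\le h$, and every neighbor $\tau$ of $\rho$ in $\Sigma_h$, one has $|u_\tau|\ge h-|u_\rho|$.
   Context: A ray is a half-line $\rho=\mathbb{R}_{\ge 0}v\subset\mathbb{R}^2$ with $v\in\mathbb{Z}^2\setminus\{0\}$; $u_\rho$ is its primitive lattice generator. On $\mathbb{Z}^2$ use the norm $|(x,y)|=\max\{|x|,|y|\}$, and $|\rho|=|u_\rho|$. $\Sigma_h$ is the complete fan whose rays are all rays $\rho$ with $|\rho|\le h$ and whose $2$-dimensional cones are spanned by angularly consecutive such rays. The neighbors of $\rho\in\Sigma_h(1)$ are the two rays of $\Sigma_h$ adjacent to $\rho$ in angular order. *)

theory Defs
  imports "HOL-Analysis.Analysis"
begin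

text \<open>A ray is represented by its primitive lattice generator u in Z^2
  (a nonzero integer vector with coprime coordinates).\<close>

definition primitive :: "int \<times> int \<Rightarrow> bool" where
  "primitive v \<longleftrightarrow> v \<noteq> (0,0) \<and> gcd (fst v) (snd v) = 1"

definition maxnorm :: "int \<times> int \<Rightarrow> int" where
  "maxnorm v = max \<bar>fst v\<bar> \<bar>snd v\<bar>"

definition rays :: "int \<Rightarrow> (int \<times> int) set" where
  "rays h = {u. primitive u \<and> maxnorm u \<le> h}"

definition ang :: "int \<times> int \<Rightarrow> real" where
  "ang v = Arg (Complex (of_int (fst v)) (of_int (snd v)))"

text \<open>Counterclockwise angular distance from u to v, in (0, 2 pi] (2 pi if equal angle).\<close>
definition ccw_dist :: "int \<times> int \<Rightarrow> int \<times> int \<Rightarrow> real" where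
  "ccw_dist u v = (if ang u < ang v then ang v - ang u else ang v - ang u + 2 * pi)"

definition neighbor :: "int \<Rightarrow> int \<times> int \<Rightarrow> int \<times> int \<Rightarrow> bool" where
  "neighbor h \<rho> \<tau> \<longleftrightarrow> \<tau> \<in> rays h \<and> \<tau> \<noteq> \<rho> \<and>
     ((\<forall>\<sigma>\<in>rays h. \<sigma> \<noteq> \<rho> \<longrightarrow> ccw_dist \<rho> \<tau> \<le> ccw_dist \<rho> \<sigma>) \<or>
      (\<forall>\<sigma>\<in>rays h. \<sigma> \<noteq> \<rho> \<longrightarrow> ccw_dist \<tau> \<rho> \<le> ccw_dist \<sigma> \<rho>))"

end

theory Submission
  imports Defs
begin

text \<open>If \<open>|\<rho>| + |\<tau>| < h\<close> then the primitive vector on the ray through \<open>u\<^sub>\<rho> + u\<^sub>\<tau>\<close> still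
  lies in \<open>\<Sigma>\<^sub>h\<close>. The rotation of \<open>u\<^sub>\<rho>\<close> by a right angle (in the direction of \<open>\<tau>\<close>) is also
  a ray of \<open>\<Sigma>\<^sub>h\<close>, so consecutive rays are less than \<open>\<pi>\<close> apart; then \<open>u\<^sub>\<rho> + u\<^sub>\<tau>\<close> lies
  strictly inside the cone spanned by \<open>\<rho>\<close> and \<open>\<tau>\<close>, contradicting adjacency.\<close>

definition lattice_complex :: "int \<times> int \<Rightarrow> complex" where
  "lattice_complex u = Complex (of_int (fst u)) (of_int (snd u))"

definition cross :: "int \<times> int \<Rightarrow> int \<times> int \<Rightarrow> int" where
  "cross u v = fst u * snd v - snd u * fst v"

lemma norm_lattice_complex_pos: "u \<noteq> (0, 0) \<Longrightarrow> 0 < cmod (lattice_complex u)"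
  unfolding lattice_complex_def by (cases u) (auto simp: complex_eq_iff)

lemma lattice_complex_polar:
  "cmod (lattice_complex u) * cos (ang u) = of_int (fst u)"
  "cmod (lattice_complex u) * sin (ang u) = of_int (snd u)"
proof -
  have "rcis (cmod (lattice_complex u)) (ang u) = lattice_complex u"
    unfolding ang_def lattice_complex_def by (rule rcis_cmod_Arg)
  then show "cmod (lattice_complex u) * cos (ang u) = of_int (fst u)"
    "cmod (lattice_complex u) * sin (ang u) = of_int (snd u)"
    by (metis Re_rcis Im_rcis lattice_complex_def complex.sel)+
qed

lemma ang_scale_pos:
  assumes "(g::int) > 0"
  shows "ang (g * a, g * b) = ang (a, b)"
proof -
  have "Complex (of_int (g * a)) (of_int (g * b)) = of_real (of_int g) * Complex (of_int a) (of_int b)"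
    by (simp add: complex_eq_iff)
  moreover have "Arg (of_real (of_int g) * Complex (of_int a) (of_int b)) = Arg (Complex (of_int a) (of_int b))"
    using assms by (intro Arg_times_of_real) simp
  ultimately show ?thesis
    unfolding ang_def by simp
qed

lemma ccw_dist_cases: "ccw_dist u v = ang v - ang u \<or> ccw_dist u v = ang v - ang u + 2 * pi"
  unfolding ccw_dist_def by auto

lemma ccw_dist_bounds: "0 < ccw_dist u v" "ccw_dist u v \<le> 2 * pi"
  using Arg_bounded[of "Complex (of_int (fst u)) (of_int (snd u))"]
    Arg_bounded[of "Complex (of_int (fst v)) (of_int (snd v))"]
  unfolding ccw_dist_def ang_def by auto

lemma ccw_dist_self [simp]: "ccw_dist u u = 2 * pi"
  unfolding ccw_dist_def by simp

lemma cross_eq_sin_ccw_dist: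
  "of_int (cross u v) = cmod (lattice_complex u) * cmod (lattice_complex v) * sin (ccw_dist u v)"
proof -
  have sin_eq: "sin (ccw_dist u v) = sin (ang v - ang u)"
    using ccw_dist_cases[of u v] by (auto simp: sin_periodic)
  have "of_int (cross u v) =
      (cmod (lattice_complex u) * cos (ang u)) * (cmod (lattice_complex v) * sin (ang v))
    - (cmod (lattice_complex u) * sin (ang u)) * (cmod (lattice_complex v) * cos (ang v))"
    by (simp add: lattice_complex_polar cross_def)
  then show ?thesis
    unfolding sin_eq sin_diff by (simp add: algebra_simps)
qed

lemma cross_pos_iff_ccw_dist_less_pi:
  assumes "u \<noteq> (0, 0)" "v \<noteq> (0, 0)"
  shows "0 < cross u v \<longleftrightarrow> ccw_dist u v < pi"
proof -
  have norms: "0 < cmod (lattice_complex u) * cmod (lattice_complex v)"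
    using assms by (intro mult_pos_pos norm_lattice_complex_pos)
  have "0 < cross u v \<longleftrightarrow> 0 < real_of_int (cross u v)"
    by simp
  also have "\<dots> \<longleftrightarrow> 0 < sin (ccw_dist u v)"
    unfolding cross_eq_sin_ccw_dist using mult_less_cancel_left_pos[OF norms, of 0] by simp
  also have "\<dots> \<longleftrightarrow> ccw_dist u v < pi"
  proof
    assume sin_pos: "0 < sin (ccw_dist u v)"
    show "ccw_dist u v < pi"
    proof (rule ccontr)
      assume "\<not> ccw_dist u v < pi"
      moreover have "ccw_dist u v \<noteq> 2 * pi"
        using sin_pos by auto
      ultimately have "sin (ccw_dist u v) \<le> 0"
        using ccw_dist_bounds(2)[of u v] by (intro sin_le_zero) auto
      with sin_pos show False by simp
    qed
  next
    show "ccw_dist u v < pi \<Longrightarrow> 0 < sin (ccw_dist u v)"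
      using ccw_dist_bounds(1) by (rule sin_gt_zero)
  qed
  finally show ?thesis .
qed

text \<open>The three distances are each in \<open>(0, \<pi>)\<close>, and the two sides agree modulo \<open>2\<pi>\<close>.\<close>

lemma ccw_dist_add_split:
  assumes "0 < cross u v"
  defines "w \<equiv> (fst u + fst v, snd u + snd v)"
  shows "ccw_dist u w + ccw_dist w v = ccw_dist u v"
proof -
  have nonzero: "x \<noteq> (0, 0)" if "0 < cross x y \<or> 0 < cross y x" for x y
    using that by (auto simp: cross_def)
  have "cross u w = cross u v" "cross w v = cross u v"
    unfolding w_def cross_def by (simp_all add: algebra_simps)
  with assms have "ccw_dist u w < pi" "ccw_dist w v < pi" "ccw_dist u v < pi"
    using cross_pos_iff_ccw_dist_less_pi nonzero by metis+
  then show ?thesis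
    using ccw_dist_cases[of u w] ccw_dist_cases[of w v] ccw_dist_cases[of u v]
      ccw_dist_bounds[of u w] ccw_dist_bounds[of w v] ccw_dist_bounds[of u v]
    by auto
qed

lemma rays_nonzero: "u \<in> rays h \<Longrightarrow> u \<noteq> (0, 0)"
  unfolding rays_def primitive_def by simp

lemma rays_rotate:
  assumes "(a, b) \<in> rays h"
  shows "(- b, a) \<in> rays h" "(b, - a) \<in> rays h"
  using assms unfolding rays_def primitive_def maxnorm_def by (auto simp: gcd.commute)

lemma primitive_part:
  assumes "w \<noteq> (0, 0)"
  obtains w' where "primitive w'" "maxnorm w' \<le> maxnorm w" "ang w' = ang w"
proof -
  obtain w1 w2 where w: "w = (w1, w2)" by fastforce
  define g where "g = gcd w1 w2"
  have "g > 0" using assms unfolding w g_def by simp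
  have w1: "w1 = g * (w1 div g)" and w2: "w2 = g * (w2 div g)" unfolding g_def by simp_all
  have "gcd (w1 div g) (w2 div g) = 1"
    using assms div_gcd_coprime[of w1 w2] unfolding w g_def coprime_iff_gcd_eq_1 by simp
  moreover have "(w1 div g, w2 div g) \<noteq> (0, 0)"
  proof
    assume "(w1 div g, w2 div g) = (0, 0)"
    then have "w = (0, 0)" unfolding w using w1 w2 by simp
    with assms show False ..
  qed
  ultimately have "primitive (w1 div g, w2 div g)"
    unfolding primitive_def by simp
  moreover have "\<bar>x div g\<bar> \<le> \<bar>x\<bar>" if x: "x = g * (x div g)" for x
  proof -
    have "\<bar>x div g\<bar> \<le> g * \<bar>x div g\<bar>" using \<open>g > 0\<close> by (simp add: mult_le_cancel_right1)
    also have "\<dots> = \<bar>x\<bar>" using \<open>g > 0\<close> by (subst (2) x) (simp add: abs_mult)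
    finally show ?thesis .
  qed
  then have "\<bar>w1 div g\<bar> \<le> \<bar>w1\<bar>" "\<bar>w2 div g\<bar> \<le> \<bar>w2\<bar>"
    using w1 w2 by blast+
  then have "maxnorm (w1 div g, w2 div g) \<le> maxnorm w"
    unfolding maxnorm_def w by auto
  moreover have "ang (w1 div g, w2 div g) = ang w"
    using ang_scale_pos[OF \<open>g > 0\<close>, of "w1 div g" "w2 div g"] w1 w2 unfolding w by simp
  ultimately show ?thesis using that by blast
qed

lemma short_rays_sum_between:
  assumes "u \<in> rays h" "v \<in> rays h" "maxnorm u + maxnorm v < h" "0 < cross u v"
  obtains \<sigma> where "\<sigma> \<in> rays h" "\<sigma> \<noteq> u" "\<sigma> \<noteq> v"
    "ccw_dist u \<sigma> < ccw_dist u v" "ccw_dist \<sigma> v < ccw_dist u v"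
proof -
  define w where "w = (fst u + fst v, snd u + snd v)"
  have "w \<noteq> (0, 0)" using assms(4) unfolding w_def cross_def by (auto simp: add_eq_0_iff)
  then obtain \<sigma> where "primitive \<sigma>" "maxnorm \<sigma> \<le> maxnorm w" and ang: "ang \<sigma> = ang w"
    by (rule primitive_part)
  moreover have "maxnorm w \<le> maxnorm u + maxnorm v"
    unfolding w_def maxnorm_def by auto
  ultimately have "\<sigma> \<in> rays h" using assms(3) unfolding rays_def by auto
  have "ccw_dist u \<sigma> = ccw_dist u w" "ccw_dist \<sigma> v = ccw_dist w v"
    unfolding ccw_dist_def ang by simp_all
  with ccw_dist_add_split[OF assms(4)]
  have split: "ccw_dist u \<sigma> + ccw_dist \<sigma> v = ccw_dist u v"
    unfolding w_def by simp
  have "ccw_dist u v < pi"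
    using assms cross_pos_iff_ccw_dist_less_pi rays_nonzero by blast
  with split ccw_dist_bounds[of u \<sigma>] ccw_dist_bounds[of \<sigma> v]
  have "ccw_dist u \<sigma> < ccw_dist u v" "ccw_dist \<sigma> v < ccw_dist u v"
    and "ccw_dist u \<sigma> < pi" "ccw_dist \<sigma> v < pi"
    by linarith+
  moreover from this have "\<sigma> \<noteq> u" "\<sigma> \<noteq> v"
    using pi_gt_zero by auto
  ultimately show ?thesis
    using that \<open>\<sigma> \<in> rays h\<close> by blast
qed

lemma ccw_neighbor_cross_pos:
  assumes "\<rho> \<in> rays h" "\<tau> \<in> rays h"
    and nearest: "\<forall>\<sigma>\<in>rays h. \<sigma> \<noteq> \<rho> \<longrightarrow> ccw_dist \<rho> \<tau> \<le> ccw_dist \<rho> \<sigma>"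
  shows "0 < cross \<rho> \<tau>"
proof -
  obtain a b where \<rho>: "\<rho> = (a, b)" by fastforce
  have "(a, b) \<noteq> (0, 0)" using assms(1) rays_nonzero \<rho> by blast
  then have "0 < cross \<rho> (- b, a)" "(- b, a) \<noteq> (0, 0)" "(- b, a) \<noteq> \<rho>"
    unfolding \<rho> cross_def by (auto simp: sum_squares_gt_zero_iff)
  moreover have "(- b, a) \<in> rays h"
    using assms(1) rays_rotate(1) unfolding \<rho> by blast
  ultimately have "ccw_dist \<rho> \<tau> \<le> ccw_dist \<rho> (- b, a)" "ccw_dist \<rho> (- b, a) < pi"
    using nearest cross_pos_iff_ccw_dist_less_pi rays_nonzero assms(1) by blast+
  then show ?thesis
    using cross_pos_iff_ccw_dist_less_pi rays_nonzero assms(1,2) by (meson order.strict_trans1)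
qed

lemma cw_neighbor_cross_pos:
  assumes "\<rho> \<in> rays h" "\<tau> \<in> rays h"
    and nearest: "\<forall>\<sigma>\<in>rays h. \<sigma> \<noteq> \<rho> \<longrightarrow> ccw_dist \<tau> \<rho> \<le> ccw_dist \<sigma> \<rho>"
  shows "0 < cross \<tau> \<rho>"
proof -
  obtain a b where \<rho>: "\<rho> = (a, b)" by fastforce
  have "(a, b) \<noteq> (0, 0)" using assms(1) rays_nonzero \<rho> by blast
  then have "0 < cross (b, - a) \<rho>" "(b, - a) \<noteq> (0, 0)" "(b, - a) \<noteq> \<rho>"
    unfolding \<rho> cross_def by (auto simp: sum_squares_gt_zero_iff)
  moreover have "(b, - a) \<in> rays h"
    using assms(1) rays_rotate(2) unfolding \<rho> by blast
  ultimately have "ccw_dist \<tau> \<rho> \<le> ccw_dist (b, - a) \<rho>" "ccw_dist (b, - a) \<rho> < pi"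
    using nearest cross_pos_iff_ccw_dist_less_pi rays_nonzero assms(1) by blast+
  then show ?thesis
    using cross_pos_iff_ccw_dist_less_pi rays_nonzero assms(1,2) by (meson order.strict_trans1)
qed

theorem mainTheorem10:
  fixes h :: int and \<rho> \<tau> :: "int \<times> int"
  assumes "h \<ge> 1" and "\<rho> \<in> rays h" and "neighbor h \<rho> \<tau>"
  shows "maxnorm \<tau> \<ge> h - maxnorm \<rho>"
proof (rule ccontr)
  assume "\<not> ?thesis"
  then have short: "maxnorm \<rho> + maxnorm \<tau> < h" "maxnorm \<tau> + maxnorm \<rho> < h" by simp_all
  have \<tau>: "\<tau> \<in> rays h" using assms(3) unfolding neighbor_def by blast
  from assms(3) consider
      (ccw) "\<forall>\<sigma>\<in>rays h. \<sigma> \<noteq> \<rho> \<longrightarrow> ccw_dist \<rho> \<tau> \<le> ccw_dist \<rho> \<sigma>"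
    | (cw) "\<forall>\<sigma>\<in>rays h. \<sigma> \<noteq> \<rho> \<longrightarrow> ccw_dist \<tau> \<rho> \<le> ccw_dist \<sigma> \<rho>"
    unfolding neighbor_def by blast
  then show False
  proof cases
    case ccw
    then have "0 < cross \<rho> \<tau>" using assms(2) \<tau> by (rule ccw_neighbor_cross_pos[rotated 2])
    with assms(2) \<tau> short(1) obtain \<sigma>
      where "\<sigma> \<in> rays h" "\<sigma> \<noteq> \<rho>" "ccw_dist \<rho> \<sigma> < ccw_dist \<rho> \<tau>"
      by (rule short_rays_sum_between)
    with ccw show False by fastforce
  next
    case cw
    then have "0 < cross \<tau> \<rho>" using assms(2) \<tau> by (rule cw_neighbor_cross_pos[rotated 2])
    with \<tau> assms(2) short(2) obtain \<sigma>
      where "\<sigma> \<in> rays h" "\<sigma> \<noteq> \<rho>" "ccw_dist \<sigma> \<rho> < ccw_dist \<tau> \<rho>"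
      by (rule short_rays_sum_between)
    with cw show False by fastforce
  qed
qed

end
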